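(* Let $n\ge2$, let $D=\{(y,z)\in\mathbb R^2_{>0}:\tfrac{z^2(n+1)}{z^2+n}\le y<1\}$, and let $(x,y,z)$ be the solution on its maximal interval $[0,T_{\max})$ of \[\dot x=nx^2+z^2,\quad \dot y=(n+1)z^2,\quad \dot z=\tfrac{n+1}{n}z\big((n-1)x+y\big),\] with initial condition $(1,y_0,z_0)$ where $(y_0,z_0)\in D$. Then $y,z<x$ on $[0,T_{\max})$ and there exists a constant $C>0$ such that \[\frac{1}{C(T_{\max}-t)}<x(t)<\frac{C}{T_{\max}-t}\qquad\text{for all }t\in[0,T_{\max}).\] *)

theory Defs
  imports Complex_Main "HOL-Library.Extended_Real"
begin

definition half_ival :: "ereal \<Rightarrow> real set" where
  "half_ival T = {t. 0 \<le> t \<and> ereal t < T}"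

definition is_sol ::
  "nat \<Rightarrow> real \<Rightarrow> real \<Rightarrow> ereal \<Rightarrow> (real \<Rightarrow> real) \<Rightarrow> (real \<Rightarrow> real) \<Rightarrow> (real \<Rightarrow> real) \<Rightarrow> bool" where
  "is_sol n y0 z0 T x y z \<longleftrightarrow>
     T > 0 \<and> x 0 = 1 \<and> y 0 = y0 \<and> z 0 = z0 \<and>
     (\<forall>t\<in>half_ival T.
        (x has_real_derivative (real n * (x t)\<^sup>2 + (z t)\<^sup>2)) (at t within half_ival T) \<and>
        (y has_real_derivative ((real n + 1) * (z t)\<^sup>2)) (at t within half_ival T) \<and>
        (z has_real_derivative ((real n + 1) / real n * z t * ((real n - 1) * x t + y t)))
            (at t within half_ival T))"

definition is_max_sol ::
  "nat \<Rightarrow> real \<Rightarrow> real \<Rightarrow> ereal \<Rightarrow> (real \<Rightarrow> real) \<Rightarrow> (real \<Rightarrow> real) \<Rightarrow> (real \<Rightarrow> real) \<Rightarrow> bool" where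
  "is_max_sol n y0 z0 T x y z \<longleftrightarrow>
     is_sol n y0 z0 T x y z \<and>
     \<not> (\<exists>T' x' y' z'. T' > T \<and> is_sol n y0 z0 T' x' y' z' \<and>
          (\<forall>t\<in>half_ival T. x' t = x t \<and> y' t = y t \<and> z' t = z t))"

end

theory Submission
  imports Defs "HOL-Analysis.Analysis"
begin

(* Along the flow x' >= 0, so x >= 1, and 1/x + n t has derivative -z^2/x^2 <= 0; hence
   n (s - t) < 1/x(t) for t <= s, which gives T <= 1/n and x(t) <= 1/(n (T - t)).
   The region {y < x, |z| < x} is invariant: inside it (x - y)' = n (x^2 - z^2) >= 0, and at a
   first time where |z| = x the derivative of x - sgn(z) z equals (n+1)/n x (x - y) > 0.
   In that region 1/x + (n+1) t is nondecreasing, its derivative being (x^2 - z^2)/x^2.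
   If x stayed bounded, so would y and z, and the solution could be continued beyond T
   (local Picard-Lindeloef existence); so x is unbounded, and the monotonicity of
   1/x + (n+1) t then yields x(t) >= 1/((n+1) (T - t)). *)

lemma DERIV_within_nonneg_imp_increasing:
  fixes f :: "real \<Rightarrow> real"
  assumes S: "is_interval S" and ab: "a \<in> S" "b \<in> S" "a \<le> b"
    and f': "\<And>t. t \<in> S \<Longrightarrow> (f has_real_derivative f' t) (at t within S)"
    and nonneg: "\<And>t. t \<in> S \<Longrightarrow> 0 \<le> f' t"
  shows "f a \<le> f b"
proof (rule DERIV_nonneg_imp_increasing_open[OF \<open>a \<le> b\<close>])
  have sub: "{a..b} \<subseteq> S"
    using mem_is_interval_1_I[OF S ab(1,2)] by auto
  show "continuous_on {a..b} f"
    using DERIV_continuous_on[OF f'] sub by (rule continuous_on_subset)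
  fix t assume t: "a < t" "t < b"
  have "t \<in> S"
    using sub t by auto
  moreover have "at t within S = at t"
    by (rule at_within_open_subset[of t "{a<..<b}"]) (use t sub in auto)
  ultimately have "(f has_real_derivative f' t) (at t)"
    using f' by metis
  then show "\<exists>y. (f has_real_derivative y) (at t) \<and> 0 \<le> y"
    using nonneg \<open>t \<in> S\<close> by blast
qed

lemma DERIV_within_nonpos_imp_decreasing:
  fixes f :: "real \<Rightarrow> real"
  assumes S: "is_interval S" and ab: "a \<in> S" "b \<in> S" "a \<le> b"
    and f': "\<And>t. t \<in> S \<Longrightarrow> (f has_real_derivative f' t) (at t within S)"
    and nonpos: "\<And>t. t \<in> S \<Longrightarrow> f' t \<le> 0"
  shows "f b \<le> f a"
  using DERIV_within_nonneg_imp_increasing[OF S ab, of "\<lambda>t. - f t" "\<lambda>t. - f' t"] f' nonpos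
  by (simp add: DERIV_minus)

lemma first_zero:
  fixes m :: "real \<Rightarrow> real"
  assumes m: "continuous_on {a..b} m" and "a \<le> b" "0 < m a" "m b \<le> 0"
  obtains s where "a < s" "s \<le> b" "m s = 0" "\<And>\<tau>. a \<le> \<tau> \<Longrightarrow> \<tau> < s \<Longrightarrow> 0 < m \<tau>"
proof -
  define Z where "Z = {t \<in> {a..b}. m t = 0}"
  have zero_before: "\<exists>t\<in>Z. t \<le> \<tau>" if "\<tau> \<in> {a..b}" "m \<tau> \<le> 0" for \<tau>
    using IVT2'[of m \<tau> 0 a] that \<open>0 < m a\<close> continuous_on_subset[OF m]
    by (fastforce simp: Z_def)
  have "Z \<noteq> {}" "bdd_below Z"
    using zero_before[of b] assms unfolding Z_def by auto
  moreover have "closed Z"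
    unfolding Z_def by (rule continuous_closed_preimage_constant[OF m]) simp
  ultimately have "Inf Z \<in> Z"
    by (rule closed_contains_Inf)
  moreover have "0 < m \<tau>" if "a \<le> \<tau>" "\<tau> < Inf Z" for \<tau>
  proof (rule ccontr)
    assume "\<not> 0 < m \<tau>"
    moreover have "\<tau> \<in> {a..b}"
      using that \<open>Inf Z \<in> Z\<close> by (auto simp: Z_def)
    ultimately obtain t where "t \<in> Z" "t \<le> \<tau>"
      using zero_before by force
    then show False
      using cInf_lower[OF _ \<open>bdd_below Z\<close>] that by fastforce
  qed
  moreover have "Inf Z \<noteq> a"
    using \<open>Inf Z \<in> Z\<close> \<open>0 < m a\<close> by (auto simp: Z_def)
  ultimately show ?thesis
    using that[of "Inf Z"] by (auto simp: Z_def)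
qed

lemma DERIV_nonpos_at_first_zero:
  fixes f :: "real \<Rightarrow> real"
  assumes f': "(f has_real_derivative D) (at s)" and "f s = 0" "a < s"
    and pos: "\<And>\<tau>. a \<le> \<tau> \<Longrightarrow> \<tau> < s \<Longrightarrow> 0 < f \<tau>"
  shows "D \<le> 0"
proof (rule ccontr)
  assume "\<not> D \<le> 0"
  then obtain d where "0 < d" and d: "\<And>h. 0 < h \<Longrightarrow> h < d \<Longrightarrow> f (s - h) < f s"
    using DERIV_pos_inc_left[OF f'] by auto
  define h where "h = min d (s - a) / 2"
  have "0 < h" "h < d" "h \<le> s - a"
    using \<open>0 < d\<close> \<open>a < s\<close> by (auto simp: h_def)
  then show False
    using d[of h] pos[of "s - h"] \<open>f s = 0\<close> by auto
qed

lemma has_vector_derivative_Pair_iff: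
  "((\<lambda>t. (f t, g t)) has_vector_derivative (f', g')) (at t within S) \<longleftrightarrow>
     (f has_vector_derivative f') (at t within S) \<and> (g has_vector_derivative g') (at t within S)"
proof
  assume "((\<lambda>t. (f t, g t)) has_vector_derivative (f', g')) (at t within S)"
  then have "((\<lambda>t. (f t, g t)) has_derivative (\<lambda>h. h *\<^sub>R (f', g'))) (at t within S)"
    by (simp add: has_vector_derivative_def)
  from has_derivative_fst[OF this] has_derivative_snd[OF this]
  show "(f has_vector_derivative f') (at t within S) \<and> (g has_vector_derivative g') (at t within S)"
    by (simp add: has_vector_derivative_def)
next
  assume "(f has_vector_derivative f') (at t within S) \<and> (g has_vector_derivative g') (at t within S)"
  then show "((\<lambda>t. (f t, g t)) has_vector_derivative (f', g')) (at t within S)"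
    by (intro has_vector_derivative_Pair) auto
qed

lemma has_vector_derivative_within_Un:
  assumes "(f has_vector_derivative D) (at t within S)" "(f has_vector_derivative D) (at t within T)"
  shows "(f has_vector_derivative D) (at t within S \<union> T)"
  using assms unfolding has_vector_derivative_def has_derivative_within by (auto intro: Lim_Un)

lemma has_vector_derivative_glue:
  fixes f g :: "real \<Rightarrow> 'a::real_normed_vector"
  assumes "a \<le> b" "b \<le> c" "f b = g b"
    and f: "\<And>t. t \<in> {a..b} \<Longrightarrow> (f has_vector_derivative D t) (at t within {a..b})"
    and g: "\<And>t. t \<in> {b..c} \<Longrightarrow> (g has_vector_derivative D t) (at t within {b..c})"
    and t: "t \<in> {a..c}"
  shows "((\<lambda>t. if t \<le> b then f t else g t) has_vector_derivative D t) (at t within {a..c})"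
    (is "(?V has_vector_derivative _) _")
proof -
  have Vf: "(?V has_vector_derivative D t) (at t within {a..b})" if "t \<in> {a..b}"
    using f[OF that] by (rule has_vector_derivative_transform[rotated 2]) (use that in auto)
  have Vg: "(?V has_vector_derivative D t) (at t within {b..c})" if "t \<in> {b..c}"
    using g[OF that] by (rule has_vector_derivative_transform[rotated 2]) (use that \<open>f b = g b\<close> in auto)
  consider "t < b" | "t = b" | "b < t"
    by linarith
  then show ?thesis
  proof cases
    case 1
    have "at t within {a..c} = at t within {a..b}"
      by (rule at_within_nhd[of _ "{..<b}"]) (use 1 assms(2) in auto)
    then show ?thesis
      using Vf 1 t by auto
  next
    case 2
    have "{a..c} = {a..b} \<union> {b..c}"
      using assms(1,2) by auto
    then show ?thesis
      using has_vector_derivative_within_Un[OF Vf Vg] 2 assms(1,2) by auto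
  next
    case 3
    have "at t within {a..c} = at t within {b..c}"
      by (rule at_within_nhd[of _ "{b<..}"]) (use 3 assms(1) in auto)
    then show ?thesis
      using Vg 3 t by auto
  qed
qed

lemma has_vector_derivative_integral_equation:
  fixes k :: "real \<Rightarrow> 'a::banach"
  assumes k: "continuous_on {a..b} k"
    and u: "\<And>s. s \<in> {a..b} \<Longrightarrow> u s = c + integral {a..s} k"
    and t: "t \<in> {a..b}"
  shows "(u has_vector_derivative k t) (at t within {a..b})"
proof -
  have "((\<lambda>s. c + integral {a..s} k) has_vector_derivative k t) (at t within {a..b})"
    using has_vector_derivative_add[OF has_vector_derivative_const integral_has_vector_derivative[OF k t]]
    by simp
  then show ?thesis
    by (rule has_vector_derivative_transform[rotated 2]) (use u t in auto)
qed

lemma has_vector_derivative_on_closed_interval: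
  fixes u k :: "real \<Rightarrow> 'a::banach"
  assumes "a \<le> b" and u: "continuous_on {a..b} u" and k: "continuous_on {a..b} k"
    and u': "\<And>s. a < s \<Longrightarrow> s < b \<Longrightarrow> (u has_vector_derivative k s) (at s)"
    and t: "t \<in> {a..b}"
  shows "(u has_vector_derivative k t) (at t within {a..b})"
proof (rule has_vector_derivative_integral_equation[OF k _ t])
  fix s assume s: "s \<in> {a..b}"
  have "(k has_integral (u s - u a)) {a..s}"
    using s by (intro fundamental_theorem_of_calculus_interior)
      (auto intro: continuous_on_subset[OF u] u')
  then show "u s = u a + integral {a..s} k"
    by (simp add: integral_unique)
qed

section \<open>Maps that are Lipschitz on every ball\<close>

definition lipschitz_on_balls :: "('a::real_normed_vector \<Rightarrow> 'b::metric_space) \<Rightarrow> bool" where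
  "lipschitz_on_balls F \<longleftrightarrow> (\<forall>R. \<exists>L. L-lipschitz_on (cball 0 R) F)"

lemma lipschitz_on_balls_ident: "lipschitz_on_balls (\<lambda>w. w)"
  unfolding lipschitz_on_balls_def by (blast intro: lipschitz_on_id)

lemma lipschitz_on_balls_const: "lipschitz_on_balls (\<lambda>w. c)"
  unfolding lipschitz_on_balls_def by (blast intro: lipschitz_on_constant)

lemma lipschitz_on_balls_comp_nonexpansive:
  assumes g: "\<And>u v. dist (g u) (g v) \<le> dist u v" and f: "lipschitz_on_balls f"
  shows "lipschitz_on_balls (\<lambda>w. g (f w))"
  unfolding lipschitz_on_balls_def
proof
  fix R
  obtain L where L: "L-lipschitz_on (cball 0 R) f"
    using f unfolding lipschitz_on_balls_def by blast
  have "L-lipschitz_on (cball 0 R) (\<lambda>w. g (f w))"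
  proof (rule lipschitz_onI)
    show "dist (g (f v)) (g (f w)) \<le> L * dist v w" if "v \<in> cball 0 R" "w \<in> cball 0 R" for v w
      using order_trans[OF g lipschitz_onD[OF L that]] .
  qed (rule lipschitz_on_nonneg[OF L])
  then show "\<exists>L. L-lipschitz_on (cball 0 R) (\<lambda>w. g (f w))" ..
qed

lemma lipschitz_on_balls_fst: "lipschitz_on_balls f \<Longrightarrow> lipschitz_on_balls (\<lambda>w. fst (f w))"
  using lipschitz_on_balls_comp_nonexpansive[OF dist_fst_le] .

lemma lipschitz_on_balls_snd: "lipschitz_on_balls f \<Longrightarrow> lipschitz_on_balls (\<lambda>w. snd (f w))"
  using lipschitz_on_balls_comp_nonexpansive[OF dist_snd_le] .

lemma lipschitz_on_balls_Pair:
  assumes "lipschitz_on_balls f" "lipschitz_on_balls g"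
  shows "lipschitz_on_balls (\<lambda>w. (f w, g w))"
  using assms unfolding lipschitz_on_balls_def by (metis lipschitz_on_Pair)

lemma lipschitz_on_balls_add:
  fixes f g :: "'a::real_normed_vector \<Rightarrow> 'b::real_normed_vector"
  assumes "lipschitz_on_balls f" "lipschitz_on_balls g"
  shows "lipschitz_on_balls (\<lambda>w. f w + g w)"
  using assms unfolding lipschitz_on_balls_def by (metis lipschitz_on_add)

lemma lipschitz_on_mult:
  fixes f g :: "'a::metric_space \<Rightarrow> 'b::real_normed_algebra"
  assumes f: "C-lipschitz_on U f" and g: "D-lipschitz_on U g"
    and A: "0 \<le> A" "\<And>w. w \<in> U \<Longrightarrow> norm (f w) \<le> A"
    and B: "0 \<le> B" "\<And>w. w \<in> U \<Longrightarrow> norm (g w) \<le> B"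
  shows "(A * D + B * C)-lipschitz_on U (\<lambda>w. f w * g w)"
proof (rule lipschitz_onI)
  fix v w assume vw: "v \<in> U" "w \<in> U"
  have "f v * g v - f w * g w = f v * (g v - g w) + (f v - f w) * g w"
    by (simp add: algebra_simps)
  then have "dist (f v * g v) (f w * g w) \<le> norm (f v) * norm (g v - g w) + norm (f v - f w) * norm (g w)"
    by (metis dist_norm norm_mult_ineq norm_triangle_le add_mono)
  also have "\<dots> \<le> A * (D * dist v w) + (C * dist v w) * B"
    using vw A B lipschitz_onD[OF f vw] lipschitz_onD[OF g vw] lipschitz_on_nonneg[OF f]
    by (intro add_mono mult_mono) (auto simp: dist_norm)
  finally show "dist (f v * g v) (f w * g w) \<le> (A * D + B * C) * dist v w"
    by (simp add: algebra_simps)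
qed (use A B lipschitz_on_nonneg[OF f] lipschitz_on_nonneg[OF g] in simp)

lemma lipschitz_on_cball_norm_le:
  fixes f :: "'a::real_normed_vector \<Rightarrow> 'b::real_normed_vector"
  assumes "L-lipschitz_on (cball 0 R) f" "w \<in> cball 0 R"
  shows "norm (f w) \<le> norm (f 0) + L * \<bar>R\<bar>"
proof -
  have "norm w \<le> R"
    using assms(2) by simp
  then have "0 \<in> cball 0 R" "norm w \<le> \<bar>R\<bar>"
    using order_trans[OF norm_ge_zero] by auto
  have "dist (f w) (f 0) \<le> L * dist w 0"
    by (rule lipschitz_onD[OF assms \<open>0 \<in> cball 0 R\<close>])
  also have "\<dots> \<le> L * \<bar>R\<bar>"
    using \<open>norm w \<le> \<bar>R\<bar>\<close> lipschitz_on_nonneg[OF assms(1)] by (simp add: mult_left_mono)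
  finally show ?thesis
    using norm_triangle_sub[of "f w" "f 0"] by (simp add: dist_norm)
qed

lemma lipschitz_on_balls_mult:
  fixes f g :: "'a::real_normed_vector \<Rightarrow> 'b::real_normed_algebra"
  assumes "lipschitz_on_balls f" "lipschitz_on_balls g"
  shows "lipschitz_on_balls (\<lambda>w. f w * g w)"
  unfolding lipschitz_on_balls_def
proof
  fix R
  obtain C D where f: "C-lipschitz_on (cball 0 R) f" and g: "D-lipschitz_on (cball 0 R) g"
    using assms unfolding lipschitz_on_balls_def by blast
  show "\<exists>L. L-lipschitz_on (cball 0 R) (\<lambda>w. f w * g w)"
    using lipschitz_on_mult[OF f g _ lipschitz_on_cball_norm_le[OF f] _ lipschitz_on_cball_norm_le[OF g]]
      lipschitz_on_nonneg[OF f] lipschitz_on_nonneg[OF g] by auto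
qed

lemma lipschitz_on_balls_cball:
  assumes "lipschitz_on_balls F"
  obtains L where "L-lipschitz_on (cball c r) F"
proof -
  obtain L where "L-lipschitz_on (cball 0 (norm c + \<bar>r\<bar>)) F"
    using assms unfolding lipschitz_on_balls_def by blast
  moreover have "cball c r \<subseteq> cball 0 (norm c + \<bar>r\<bar>)"
  proof
    fix v assume "v \<in> cball c r"
    then have "norm (v - c) \<le> \<bar>r\<bar>"
      by (simp add: dist_norm norm_minus_commute)
    then show "v \<in> cball 0 (norm c + \<bar>r\<bar>)"
      using norm_triangle_sub[of v c] by simp
  qed
  ultimately show ?thesis
    using that lipschitz_on_subset by blast
qed

lemma lipschitz_on_balls_imp_continuous:
  assumes "lipschitz_on_balls F"
  shows "continuous_on UNIV F"
proof (rule continuous_at_imp_continuous_on, rule ballI)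
  fix v :: 'a
  obtain L where "L-lipschitz_on (cball 0 (norm v + 1)) F"
    using assms unfolding lipschitz_on_balls_def by blast
  then have "continuous_on (ball 0 (norm v + 1)) F"
    using lipschitz_on_continuous_on continuous_on_subset ball_subset_cball by metis
  then show "isCont F v"
    by (rule continuous_on_interior) simp
qed

section \<open>Local existence and continuation of solutions\<close>

lemma bounded_lipschitz_extension_from_cball:
  fixes F :: "'a::euclidean_space \<Rightarrow> 'b::real_normed_vector"
  assumes r: "0 \<le> r" and F: "L-lipschitz_on (cball c r) F"
  obtains G B where "L-lipschitz_on UNIV G" "\<And>v. norm (G v) \<le> B"
    "\<And>v. v \<in> cball c r \<Longrightarrow> G v = F v"
proof -
  define P where "P = closest_point (cball c r)"
  have P: "P v \<in> cball c r" for v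
    unfolding P_def using r by (intro closest_point_in_set) auto
  have "1-lipschitz_on UNIV P"
    unfolding P_def by (rule lipschitz_onI) (use closest_point_lipschitz[of "cball c r"] r in auto)
  moreover have "L-lipschitz_on (P ` UNIV) F"
    using F P by (blast intro: lipschitz_on_subset)
  ultimately have "L-lipschitz_on UNIV (\<lambda>v. F (P v))"
    using lipschitz_on_compose2 by fastforce
  moreover have "bounded (F ` cball c r)"
    using F by (intro compact_imp_bounded compact_continuous_image lipschitz_on_continuous_on) auto
  then obtain B where "\<And>v. norm (F (P v)) \<le> B"
    using P unfolding bounded_iff by blast
  moreover have "P v = v" if "v \<in> cball c r" for v
    unfolding P_def using that by (rule closest_point_self)
  ultimately show ?thesis
    using that[of "\<lambda>v. F (P v)"] by auto
qed

(* Picard's operator, with the time argument frozen outside [t0, t0 + h] so that it maps bounded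
   continuous functions on the whole line to themselves. *)
definition picard_operator ::
    "('a::banach \<Rightarrow> 'a) \<Rightarrow> real \<Rightarrow> real \<Rightarrow> 'a \<Rightarrow> (real \<Rightarrow>\<^sub>C 'a) \<Rightarrow> real \<Rightarrow> 'a" where
  "picard_operator G t0 h c f t = c + integral {t0..max t0 (min t (t0 + h))} (\<lambda>s. G (f s))"

lemma picard_operator_bcontfun:
  fixes G :: "'a::euclidean_space \<Rightarrow> 'a"
  assumes G: "continuous_on UNIV G" and bnd: "\<And>v. norm (G v) \<le> B" and "0 \<le> h"
  shows "picard_operator G t0 h c f \<in> bcontfun"
proof (rule bcontfun_normI)
  have Gf: "continuous_on S (\<lambda>s. G (apply_bcontfun f s))" for S
    using G continuous_on_apply_bcontfun by (blast intro: continuous_on_compose2 continuous_on_subset)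
  have "continuous_on {t0..t0+h} (\<lambda>t. integral {t0..t} (\<lambda>s. G (apply_bcontfun f s)))"
    by (intro indefinite_integral_continuous_1 integrable_continuous_interval Gf)
  then show "continuous_on UNIV (picard_operator G t0 h c f)"
    unfolding picard_operator_def using \<open>0 \<le> h\<close>
    by (auto intro!: continuous_intros intro: continuous_on_compose2)
  fix t
  define t' where "t' = max t0 (min t (t0 + h))"
  have "norm (integral {t0..t'} (\<lambda>s. G (apply_bcontfun f s))) \<le> B * (t' - t0)"
    using \<open>0 \<le> h\<close> by (intro integral_bound Gf bnd) (auto simp: t'_def)
  also have "\<dots> \<le> B * h"
    using \<open>0 \<le> h\<close> order_trans[OF norm_ge_zero bnd] by (intro mult_left_mono) (auto simp: t'_def)
  finally show "norm (picard_operator G t0 h c f t) \<le> norm c + B * h"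
    unfolding picard_operator_def t'_def[symmetric]
    by (meson add_left_mono norm_triangle_ineq order_trans)
qed

lemma picard_operator_contraction:
  fixes G :: "'a::euclidean_space \<Rightarrow> 'a"
  assumes lip: "L-lipschitz_on UNIV G" and "0 \<le> h"
  shows "dist (picard_operator G t0 h c f t) (picard_operator G t0 h c g t) \<le> (L * h) * dist f g"
proof -
  define t' where "t' = max t0 (min t (t0 + h))"
  have t': "t0 \<le> t'" "t' - t0 \<le> h"
    using \<open>0 \<le> h\<close> by (auto simp: t'_def)
  have Gf: "continuous_on S (\<lambda>s. G (apply_bcontfun f s))" for f S
    using lipschitz_on_continuous_on[OF lip] continuous_on_apply_bcontfun
    by (blast intro: continuous_on_compose2 continuous_on_subset)
  have "dist (picard_operator G t0 h c f t) (picard_operator G t0 h c g t) =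
      norm (integral {t0..t'} (\<lambda>s. G (apply_bcontfun f s) - G (apply_bcontfun g s)))"
    unfolding picard_operator_def t'_def[symmetric] dist_norm
    by (subst integral_diff) (auto intro: integrable_continuous_interval Gf)
  also have "\<dots> \<le> (L * dist f g) * (t' - t0)"
  proof (rule integral_bound)
    fix s
    show "norm (G (apply_bcontfun f s) - G (apply_bcontfun g s)) \<le> L * dist f g"
      using lipschitz_onD[OF lip, of "apply_bcontfun f s" "apply_bcontfun g s"]
        dist_bounded[of f s g] lipschitz_on_nonneg[OF lip]
      by (smt (verit) UNIV_I dist_norm mult_left_mono)
  qed (use t' in \<open>auto intro: continuous_intros Gf\<close>)
  also have "\<dots> \<le> (L * dist f g) * h"
    using t' lipschitz_on_nonneg[OF lip] by (intro mult_left_mono) auto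
  finally show ?thesis
    by (simp add: algebra_simps)
qed

lemma integral_equation_solvable:
  fixes G :: "'a::euclidean_space \<Rightarrow> 'a"
  assumes lip: "L-lipschitz_on UNIV G" and bnd: "\<And>v. norm (G v) \<le> B"
    and h: "0 \<le> h" "L * h < 1"
  obtains u where "continuous_on UNIV u"
    "\<And>t. t \<in> {t0..t0+h} \<Longrightarrow> u t = c + integral {t0..t} (\<lambda>s. G (u s))"
proof -
  define \<Phi> where "\<Phi> f = Bcontfun (picard_operator G t0 h c f)" for f
  have \<Phi>: "apply_bcontfun (\<Phi> f) = picard_operator G t0 h c f" for f
    unfolding \<Phi>_def
    by (rule Bcontfun_inverse[OF picard_operator_bcontfun[OF lipschitz_on_continuous_on[OF lip] bnd h(1)]])
  have "\<forall>f g. dist (\<Phi> f) (\<Phi> g) \<le> (L * h) * dist f g"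
    unfolding \<Phi> by (intro allI dist_bound) (simp add: \<Phi> picard_operator_contraction[OF lip h(1)])
  moreover have "0 \<le> L * h"
    using h(1) lipschitz_on_nonneg[OF lip] by simp
  ultimately obtain f where "\<Phi> f = f"
    using banach_fix_type h(2) by blast
  then have u: "apply_bcontfun f t = picard_operator G t0 h c f t" for t
    using fun_cong[OF \<Phi>[of f], of t] by simp
  show ?thesis
  proof (rule that)
    show "continuous_on UNIV (apply_bcontfun f)"
      by (rule continuous_on_apply_bcontfun)
    show "apply_bcontfun f t = c + integral {t0..t} (\<lambda>s. G (apply_bcontfun f s))"
      if "t \<in> {t0..t0+h}" for t
      using u[of t] that by (simp add: picard_operator_def)
  qed
qed

lemma local_solution_exists:
  fixes F :: "'a::euclidean_space \<Rightarrow> 'a"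
  assumes r: "0 < r" and F: "L-lipschitz_on (cball c r) F"
  obtains h u where "0 < h" "u t0 = c"
    "\<And>t. t \<in> {t0..t0+h} \<Longrightarrow> (u has_vector_derivative F (u t)) (at t within {t0..t0+h})"
proof -
  obtain G B where G: "L-lipschitz_on UNIV G" "\<And>v. norm (G v) \<le> B"
    and GF: "\<And>v. v \<in> cball c r \<Longrightarrow> G v = F v"
    using bounded_lipschitz_extension_from_cball[OF less_imp_le[OF r] F] by metis
  have "0 \<le> L" "0 \<le> B"
    using lipschitz_on_nonneg[OF G(1)] order_trans[OF norm_ge_zero G(2)] by auto
  define h where "h = min (1 / (L + 1)) (r / (B + 1))"
  have h: "0 < h" "L * h < 1" "B * h \<le> r"
  proof -
    show "0 < h"
      using r \<open>0 \<le> L\<close> \<open>0 \<le> B\<close> by (simp add: h_def)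
    have "L * h \<le> L * (1 / (L + 1))"
      using \<open>0 \<le> L\<close> by (intro mult_left_mono) (auto simp: h_def)
    also have "\<dots> < 1"
      using \<open>0 \<le> L\<close> by simp
    finally show "L * h < 1" .
    have "B * h \<le> B * (r / (B + 1))"
      using \<open>0 \<le> B\<close> by (intro mult_left_mono) (auto simp: h_def)
    also have "\<dots> \<le> r"
      using \<open>0 \<le> B\<close> r by (simp add: field_simps)
    finally show "B * h \<le> r" .
  qed
  obtain u where u_cont: "continuous_on UNIV u"
    and u: "\<And>t. t \<in> {t0..t0+h} \<Longrightarrow> u t = c + integral {t0..t} (\<lambda>s. G (u s))"
    using integral_equation_solvable[OF G, of h] h by (metis less_imp_le)
  have Gu_cont: "continuous_on S (\<lambda>s. G (u s))" for S
    using lipschitz_on_continuous_on[OF G(1)] u_cont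
    by (blast intro: continuous_on_compose2 continuous_on_subset)
  have "u t \<in> cball c r" if t: "t \<in> {t0..t0+h}" for t
  proof -
    have "norm (u t - c) \<le> B * (t - t0)"
      using u[OF t] t by (auto intro: integral_bound Gu_cont G(2))
    also have "\<dots> \<le> B * h"
      using t \<open>0 \<le> B\<close> by (intro mult_left_mono) auto
    finally show ?thesis
      using h by (simp add: dist_norm norm_minus_commute)
  qed
  then show ?thesis
    using that[of h u] h u[of t0] GF has_vector_derivative_integral_equation[OF Gu_cont u]
    by auto
qed

lemma bounded_solution_lipschitz:
  fixes F :: "'a::euclidean_space \<Rightarrow> 'a"
  assumes F: "continuous_on UNIV F"
    and W: "\<And>t. t \<in> S \<Longrightarrow> (W has_vector_derivative F (W t)) (at t within S)"
    and bdd: "bounded (W ` S)" and "convex S"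
  obtains K where "K-lipschitz_on S W"
proof -
  obtain R where "\<forall>v\<in>W ` S. norm v \<le> R"
    using bdd bounded_iff by blast
  then have R: "\<And>t. t \<in> S \<Longrightarrow> W t \<in> cball 0 R"
    by simp
  have "bounded (F ` cball 0 R)"
    using F by (intro compact_imp_bounded compact_continuous_image) (auto intro: continuous_on_subset)
  then obtain K where "\<forall>w\<in>F ` cball 0 R. norm w \<le> K"
    unfolding bounded_iff by blast
  then have K: "\<And>v. v \<in> cball 0 R \<Longrightarrow> norm (F v) \<le> K"
    by simp
  have "(max K 0)-lipschitz_on S W"
  proof (rule bounded_derivative_imp_lipschitz)
    show "(W has_derivative (\<lambda>h. h *\<^sub>R F (W t))) (at t within S)" if "t \<in> S" for t
      using W[OF that] by (simp add: has_vector_derivative_def)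
    show "onorm (\<lambda>h. h *\<^sub>R F (W t)) \<le> max K 0" if "t \<in> S" for t
      using K[OF R[OF that]] by (simp add: onorm_scaleR_left[OF bounded_linear_ident] onorm_id)
  qed (simp_all add: \<open>convex S\<close>)
  then show ?thesis ..
qed

lemma bounded_solution_extends_to_endpoint:
  fixes F :: "'a::euclidean_space \<Rightarrow> 'a"
  assumes F: "continuous_on UNIV F" and "a < b"
    and W: "\<And>t. t \<in> {a..<b} \<Longrightarrow> (W has_vector_derivative F (W t)) (at t within {a..<b})"
    and bdd: "bounded (W ` {a..<b})"
  obtains V where "\<And>t. t \<in> {a..<b} \<Longrightarrow> V t = W t"
    "\<And>t. t \<in> {a..b} \<Longrightarrow> (V has_vector_derivative F (V t)) (at t within {a..b})"
proof -
  have "convex {a..<b}"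
    by simp
  then obtain K where "K-lipschitz_on {a..<b} W"
    using bounded_solution_lipschitz[OF F W bdd] by blast
  then obtain V where V_lip: "K-lipschitz_on {a..b} V" and VW: "\<And>t. t \<in> {a..<b} \<Longrightarrow> V t = W t"
    using lipschitz_extend_closure \<open>a < b\<close> by fastforce
  have V_cont: "continuous_on {a..b} V"
    using V_lip by (rule lipschitz_on_continuous_on)
  have "(V has_vector_derivative F (V t)) (at t within {a..b})" if t: "t \<in> {a..b}" for t
  proof (rule has_vector_derivative_on_closed_interval[OF _ V_cont _ _ t])
    show "continuous_on {a..b} (\<lambda>s. F (V s))"
      using continuous_on_compose2[OF F V_cont] by simp
    fix s assume s: "a < s" "s < b"
    have "at s within {a..<b} = at s"
      by (rule at_within_open_subset[of s "{a<..<b}"]) (use s in auto)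
    then have "(W has_vector_derivative F (W s)) (at s)"
      using W[of s] s by simp
    then have "(V has_vector_derivative F (W s)) (at s)"
      by (rule has_vector_derivative_transform_within_open[where S = "{a<..<b}"]) (use s VW in auto)
    then show "(V has_vector_derivative F (V s)) (at s)"
      using VW[of s] s by simp
  qed (use \<open>a < b\<close> in simp)
  then show ?thesis
    using that VW by blast
qed

lemma bounded_solution_extends:
  fixes F :: "'a::euclidean_space \<Rightarrow> 'a"
  assumes F: "lipschitz_on_balls F" and "a < b"
    and W: "\<And>t. t \<in> {a..<b} \<Longrightarrow> (W has_vector_derivative F (W t)) (at t within {a..<b})"
    and bdd: "bounded (W ` {a..<b})"
  obtains h V where "0 < h" "\<And>t. t \<in> {a..<b} \<Longrightarrow> V t = W t"
    "\<And>t. t \<in> {a..<b+h} \<Longrightarrow> (V has_vector_derivative F (V t)) (at t within {a..<b+h})"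
proof -
  obtain V0 where V0W: "\<And>t. t \<in> {a..<b} \<Longrightarrow> V0 t = W t"
    and V0: "\<And>t. t \<in> {a..b} \<Longrightarrow> (V0 has_vector_derivative F (V0 t)) (at t within {a..b})"
    using bounded_solution_extends_to_endpoint[OF lipschitz_on_balls_imp_continuous[OF F] \<open>a < b\<close> W bdd]
    by blast
  obtain L where "L-lipschitz_on (cball (V0 b) 1) F"
    using lipschitz_on_balls_cball[OF F] by blast
  then obtain h u where h: "0 < h" and "u b = V0 b"
    and u: "\<And>t. t \<in> {b..b+h} \<Longrightarrow> (u has_vector_derivative F (u t)) (at t within {b..b+h})"
    using local_solution_exists[of 1] by (metis zero_less_one)
  define V where "V t = (if t \<le> b then V0 t else u t)" for t
  have V': "(V has_vector_derivative F (V t)) (at t within {a..b+h})" if "t \<in> {a..b+h}" for t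
    unfolding V_def
  proof (rule has_vector_derivative_glue[where D = "\<lambda>s. F (if s \<le> b then V0 s else u s)"])
    show "(V0 has_vector_derivative F (if s \<le> b then V0 s else u s)) (at s within {a..b})"
      if "s \<in> {a..b}" for s
      using V0[OF that] that by simp
    show "(u has_vector_derivative F (if s \<le> b then V0 s else u s)) (at s within {b..b+h})"
      if "s \<in> {b..b+h}" for s
      using u[OF that] that \<open>u b = V0 b\<close> by (cases "s = b") auto
  qed (use \<open>a < b\<close> h that \<open>u b = V0 b\<close> in auto)
  have "(V has_vector_derivative F (V t)) (at t within {a..<b+h})" if "t \<in> {a..<b+h}" for t
  proof (rule has_vector_derivative_within_subset)
    show "(V has_vector_derivative F (V t)) (at t within {a..b+h})"
      using V' that by simp
  qed auto
  moreover have "V t = W t" if "t \<in> {a..<b}" for t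
    using that V0W by (simp add: V_def)
  ultimately show ?thesis
    using that h by blast
qed

section \<open>The blow-up system\<close>

lemma is_interval_half_ival: "is_interval (half_ival T)"
  unfolding is_interval_1 half_ival_def
proof clarsimp
  fix a b t :: real
  assume "ereal b < T" "t \<le> b"
  then show "ereal t < T"
    using le_less_trans[of "ereal t" "ereal b" T] by simp
qed

lemma zero_in_half_ival: "0 < T \<Longrightarrow> 0 \<in> half_ival T"
  by (simp add: half_ival_def zero_ereal_def)

lemma half_ival_ereal: "half_ival (ereal b) = {0..<b}"
  by (auto simp: half_ival_def)

definition ode_field :: "nat \<Rightarrow> real \<times> real \<times> real \<Rightarrow> real \<times> real \<times> real" where
  "ode_field n = (\<lambda>(x, y, z). (real n * x\<^sup>2 + z\<^sup>2, (real n + 1) * z\<^sup>2,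
     (real n + 1) / real n * z * ((real n - 1) * x + y)))"

lemma lipschitz_on_balls_ode_field: "lipschitz_on_balls (ode_field n)"
  unfolding ode_field_def split_beta' power2_eq_square
  by (intro lipschitz_on_balls_Pair lipschitz_on_balls_add lipschitz_on_balls_mult
      lipschitz_on_balls_const lipschitz_on_balls_fst lipschitz_on_balls_snd lipschitz_on_balls_ident)

lemma is_sol_iff_ode_field:
  "is_sol n y0 z0 T x y z \<longleftrightarrow> 0 < T \<and> (x 0, y 0, z 0) = (1, y0, z0) \<and>
     (\<forall>t\<in>half_ival T. ((\<lambda>t. (x t, y t, z t)) has_vector_derivative ode_field n (x t, y t, z t))
        (at t within half_ival T))"
  by (simp add: is_sol_def ode_field_def has_vector_derivative_Pair_iff
      has_real_derivative_iff_has_vector_derivative)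

locale ode_solution =
  fixes n :: nat and y0 z0 :: real and T :: ereal and x y z :: "real \<Rightarrow> real"
  assumes n_pos: "0 < n" and y0_lt_1: "y0 < 1" and abs_z0_lt_1: "\<bar>z0\<bar> < 1"
    and sol: "is_sol n y0 z0 T x y z"
begin

lemma T_pos: "0 < T" and x_0: "x 0 = 1" and y_0: "y 0 = y0" and z_0: "z 0 = z0"
  using sol by (auto simp: is_sol_def)

lemma x_deriv:
    "t \<in> half_ival T \<Longrightarrow>
      (x has_real_derivative real n * (x t)\<^sup>2 + (z t)\<^sup>2) (at t within half_ival T)"
  and y_deriv:
    "t \<in> half_ival T \<Longrightarrow>
      (y has_real_derivative (real n + 1) * (z t)\<^sup>2) (at t within half_ival T)"
  and z_deriv:
    "t \<in> half_ival T \<Longrightarrow>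
      (z has_real_derivative (real n + 1) / real n * z t * ((real n - 1) * x t + y t))
        (at t within half_ival T)"
  using sol by (auto simp: is_sol_def)

lemma x_increasing:
  assumes "t \<in> half_ival T" "s \<in> half_ival T" "t \<le> s"
  shows "x t \<le> x s"
  by (rule DERIV_within_nonneg_imp_increasing[OF is_interval_half_ival assms x_deriv]) auto

lemma y_increasing:
  assumes "t \<in> half_ival T" "s \<in> half_ival T" "t \<le> s"
  shows "y t \<le> y s"
  by (rule DERIV_within_nonneg_imp_increasing[OF is_interval_half_ival assms y_deriv]) auto

lemma x_ge_1: "t \<in> half_ival T \<Longrightarrow> 1 \<le> x t"
  using x_increasing[OF zero_in_half_ival[OF T_pos]] x_0 by (auto simp: half_ival_def)

lemma inv_x_deriv:
  assumes "t \<in> half_ival T"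
  shows "((\<lambda>t. 1 / x t + c * t) has_real_derivative c - (real n * (x t)\<^sup>2 + (z t)\<^sup>2) / (x t)\<^sup>2)
    (at t within half_ival T)"
proof -
  have "x t \<noteq> 0"
    using x_ge_1[OF assms] by simp
  then have "((\<lambda>t. 1 / x t + c * t) has_real_derivative
      (0 * x t - 1 * (real n * (x t)\<^sup>2 + (z t)\<^sup>2)) / (x t * x t) + c * 1) (at t within half_ival T)"
    by (intro DERIV_add DERIV_divide DERIV_const x_deriv[OF assms] DERIV_cmult DERIV_ident)
  moreover have "(0 * x t - 1 * (real n * (x t)\<^sup>2 + (z t)\<^sup>2)) / (x t * x t) + c * 1
      = c - (real n * (x t)\<^sup>2 + (z t)\<^sup>2) / (x t)\<^sup>2"
    using \<open>x t \<noteq> 0\<close> by (simp add: power2_eq_square field_simps)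
  ultimately show ?thesis
    by (rule DERIV_cong)
qed

lemma inv_x_add_n_decreasing:
  assumes "t \<in> half_ival T" "s \<in> half_ival T" "t \<le> s"
  shows "1 / x s + real n * s \<le> 1 / x t + real n * t"
proof -
  have "real n - (real n * (x \<tau>)\<^sup>2 + (z \<tau>)\<^sup>2) / (x \<tau>)\<^sup>2 \<le> 0" if "\<tau> \<in> half_ival T" for \<tau>
    using x_ge_1[OF that] by (simp add: field_simps)
  with DERIV_within_nonpos_imp_decreasing[OF is_interval_half_ival assms inv_x_deriv]
  show ?thesis
    by blast
qed

lemma elapsed_time_bound:
  assumes "t \<in> half_ival T" "s \<in> half_ival T" "t \<le> s"
  shows "real n * (s - t) < 1 / x t"
proof -
  have "0 < 1 / x s"
    using x_ge_1[OF assms(2)] by simp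
  then show ?thesis
    unfolding right_diff_distrib using inv_x_add_n_decreasing[OF assms] by linarith
qed

lemma T_le_inverse_n: "T \<le> ereal (1 / real n)"
proof (rule ccontr)
  assume "\<not> T \<le> ereal (1 / real n)"
  then have "1 / real n \<in> half_ival T"
    by (auto simp: half_ival_def)
  from elapsed_time_bound[OF zero_in_half_ival[OF T_pos] this] show False
    using n_pos x_0 by simp
qed

abbreviation Tmax :: real where "Tmax \<equiv> real_of_ereal T"

lemma T_less_infinity: "T < \<infinity>"
  using T_le_inverse_n by (cases T) auto

lemma Tmax_pos: "0 < Tmax"
  using T_pos T_le_inverse_n by (cases T) auto

lemma half_ival_T: "half_ival T = {0..<Tmax}"
  using T_pos T_le_inverse_n by (cases T) (auto simp: half_ival_ereal)

lemma at_within_half_ival_T: "0 < t \<Longrightarrow> t < Tmax \<Longrightarrow> at t within half_ival T = at t"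
  unfolding half_ival_T by (rule at_within_open_subset[of t "{0<..<Tmax}"]) auto

lemma x_sub_y_increasing:
  assumes s: "s \<in> half_ival T" and inv: "\<And>\<tau>. \<tau> \<in> {0..s} \<Longrightarrow> \<bar>z \<tau>\<bar> \<le> x \<tau>"
  shows "1 - y0 \<le> x s - y s"
proof -
  have sub: "{0..s} \<subseteq> half_ival T"
    using s by (auto simp: half_ival_T)
  have "x 0 - y 0 \<le> x s - y s"
  proof (rule DERIV_within_nonneg_imp_increasing[of "{0..s}" 0 s "\<lambda>t. x t - y t"])
    fix \<tau> assume \<tau>: "\<tau> \<in> {0..s}"
    have "\<tau> \<in> half_ival T"
      using \<tau> sub by auto
    from DERIV_diff[OF x_deriv[OF this] y_deriv[OF this]] sub
    show "((\<lambda>t. x t - y t) has_real_derivative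
        real n * (x \<tau>)\<^sup>2 + (z \<tau>)\<^sup>2 - (real n + 1) * (z \<tau>)\<^sup>2) (at \<tau> within {0..s})"
      by (rule DERIV_subset)
    have "(z \<tau>)\<^sup>2 \<le> (x \<tau>)\<^sup>2"
      using inv[OF \<tau>] by (simp add: abs_le_square_iff[symmetric])
    then show "0 \<le> real n * (x \<tau>)\<^sup>2 + (z \<tau>)\<^sup>2 - (real n + 1) * (z \<tau>)\<^sup>2"
      by (simp add: algebra_simps mult_left_mono)
  qed (use s in \<open>auto simp: half_ival_T\<close>)
  then show ?thesis
    using x_0 y_0 by simp
qed

lemma x_sub_sgn_z_deriv:
  assumes t: "t \<in> half_ival T" and z: "z t = \<sigma> * x t" and \<sigma>: "\<sigma>\<^sup>2 = 1"
  shows "((\<lambda>t. x t - \<sigma> * z t) has_real_derivative (real n + 1) / real n * x t * (x t - y t))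
    (at t within half_ival T)"
proof -
  have "((\<lambda>t. x t - \<sigma> * z t) has_real_derivative
      real n * (x t)\<^sup>2 + (z t)\<^sup>2 - \<sigma> * ((real n + 1) / real n * z t * ((real n - 1) * x t + y t)))
      (at t within half_ival T)"
    by (intro DERIV_diff DERIV_cmult x_deriv z_deriv t)
  moreover have "real n * (x t)\<^sup>2 + (z t)\<^sup>2 - \<sigma> * ((real n + 1) / real n * z t * ((real n - 1) * x t + y t))
      = real n * (x t)\<^sup>2 + \<sigma>\<^sup>2 * (x t)\<^sup>2 - \<sigma>\<^sup>2 * ((real n + 1) / real n * x t * ((real n - 1) * x t + y t))"
    by (simp add: z power2_eq_square algebra_simps)
  also have "\<dots> = (real n + 1) / real n * x t * (x t - y t)"
    using n_pos unfolding \<sigma> by (simp add: field_simps power2_eq_square)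
  ultimately show ?thesis
    by simp
qed

lemma abs_z_cannot_reach_x_first:
  assumes s: "s \<in> half_ival T" "0 < s" and "y s < x s" "\<bar>z s\<bar> = x s"
    and before: "\<And>\<tau>. 0 \<le> \<tau> \<Longrightarrow> \<tau> < s \<Longrightarrow> \<bar>z \<tau>\<bar> < x \<tau>"
  shows False
proof -
  define \<sigma> where "\<sigma> = sgn (z s)"
  have "z s = \<sigma> * x s" "\<sigma>\<^sup>2 = 1"
    using \<open>\<bar>z s\<bar> = x s\<close> x_ge_1[OF s(1)] by (auto simp: \<sigma>_def sgn_if)
  moreover have "s < Tmax"
    using s(1) by (simp add: half_ival_T)
  ultimately have "((\<lambda>t. x t - \<sigma> * z t) has_real_derivative (real n + 1) / real n * x s * (x s - y s)) (at s)"
    using x_sub_sgn_z_deriv[OF s(1)] at_within_half_ival_T[OF s(2)] by simp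
  moreover have "x s - \<sigma> * z s = 0"
    using \<open>z s = \<sigma> * x s\<close> \<open>\<sigma>\<^sup>2 = 1\<close> by (simp add: power2_eq_square)
  moreover have "0 < x \<tau> - \<sigma> * z \<tau>" if "0 \<le> \<tau>" "\<tau> < s" for \<tau>
  proof -
    have "\<sigma> * z \<tau> \<le> \<bar>z \<tau>\<bar>"
      using \<open>\<sigma>\<^sup>2 = 1\<close> by (auto simp: \<sigma>_def sgn_if)
    then show ?thesis
      using before[OF that] by simp
  qed
  ultimately have "(real n + 1) / real n * x s * (x s - y s) \<le> 0"
    by (rule DERIV_nonpos_at_first_zero[OF _ _ s(2)])
  moreover have "0 < (real n + 1) / real n * x s * (x s - y s)"
    using n_pos x_ge_1[OF s(1)] \<open>y s < x s\<close> by (intro mult_pos_pos divide_pos_pos) auto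
  ultimately show False
    by linarith
qed

lemma invariant_region:
  assumes t: "t \<in> half_ival T"
  shows "y t < x t \<and> \<bar>z t\<bar> < x t"
proof (rule ccontr)
  define m where "m t = min (x t - y t) (x t - \<bar>z t\<bar>)" for t
  assume "\<not> (y t < x t \<and> \<bar>z t\<bar> < x t)"
  then have "m t \<le> 0"
    by (auto simp: m_def)
  have sub: "{0..t} \<subseteq> half_ival T"
    using t by (auto simp: half_ival_T)
  have "continuous_on {0..t} m"
    unfolding m_def using DERIV_continuous_on[OF x_deriv] DERIV_continuous_on[OF y_deriv]
      DERIV_continuous_on[OF z_deriv]
    by (intro continuous_intros) (auto intro: continuous_on_subset[OF _ sub])
  moreover have "0 < m 0"
    using x_0 y_0 z_0 y0_lt_1 abs_z0_lt_1 by (simp add: m_def)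
  ultimately obtain s where s: "0 < s" "s \<le> t" "m s = 0"
    and before: "\<And>\<tau>. 0 \<le> \<tau> \<Longrightarrow> \<tau> < s \<Longrightarrow> 0 < m \<tau>"
    using first_zero[of 0 t m] \<open>m t \<le> 0\<close> t by (auto simp: half_ival_T)
  have sI: "s \<in> half_ival T"
    using s t by (auto simp: half_ival_T)
  have "1 - y0 \<le> x s - y s"
    using x_sub_y_increasing[OF sI] before s(3) by (force simp: m_def)
  then have "y s < x s" "\<bar>z s\<bar> = x s"
    using y0_lt_1 s(3) by (auto simp: m_def)
  moreover have "\<bar>z \<tau>\<bar> < x \<tau>" if "0 \<le> \<tau>" "\<tau> < s" for \<tau>
    using before[OF that] by (simp add: m_def)
  ultimately show False
    using abs_z_cannot_reach_x_first[OF sI s(1)] by blast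
qed

lemma inv_x_add_Suc_n_increasing:
  assumes "t \<in> half_ival T" "s \<in> half_ival T" "t \<le> s"
  shows "1 / x t + (real n + 1) * t \<le> 1 / x s + (real n + 1) * s"
proof -
  have "0 \<le> (real n + 1) - (real n * (x \<tau>)\<^sup>2 + (z \<tau>)\<^sup>2) / (x \<tau>)\<^sup>2" if "\<tau> \<in> half_ival T" for \<tau>
  proof -
    have "(z \<tau>)\<^sup>2 \<le> (x \<tau>)\<^sup>2"
      using invariant_region[OF that] x_ge_1[OF that] by (simp add: abs_le_square_iff[symmetric])
    then show ?thesis
      using x_ge_1[OF that] by (simp add: field_simps)
  qed
  with DERIV_within_nonneg_imp_increasing[OF is_interval_half_ival assms inv_x_deriv]
  show ?thesis
    by blast
qed

lemma x_upper:
  assumes t: "t \<in> half_ival T"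
  shows "x t \<le> 1 / (real n * (Tmax - t))"
proof -
  have "real n * (Tmax - t) \<le> 1 / x t"
  proof (rule ccontr)
    assume "\<not> real n * (Tmax - t) \<le> 1 / x t"
    then have "t + 1 / (real n * x t) \<in> half_ival T"
      using t n_pos x_ge_1[OF t] by (auto simp: half_ival_T field_simps)
    from elapsed_time_bound[OF t this] show False
      using n_pos x_ge_1[OF t] by simp
  qed
  moreover have "0 < Tmax - t"
    using t by (simp add: half_ival_T)
  ultimately show ?thesis
    using n_pos x_ge_1[OF t] by (simp add: field_simps)
qed

lemma x_lower:
  assumes unbounded: "\<And>M. \<exists>s\<in>half_ival T. M < x s" and t: "t \<in> half_ival T"
  shows "1 / ((real n + 1) * (Tmax - t)) \<le> x t"
proof -
  have "1 / x t \<le> (real n + 1) * (Tmax - t) + \<epsilon>" if "0 < \<epsilon>" for \<epsilon>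
  proof -
    obtain s0 where s0: "s0 \<in> half_ival T" "1 / \<epsilon> < x s0"
      using unbounded by blast
    define s where "s = max s0 t"
    have s: "s \<in> half_ival T" "t \<le> s" "x s0 \<le> x s"
      using s0 t x_increasing[of s0 t] by (auto simp: s_def max_def)
    then have "1 / \<epsilon> < x s"
      using s0(2) by linarith
    then have "1 / x s < \<epsilon>"
      using \<open>0 < \<epsilon>\<close> x_ge_1[OF s(1)] by (simp add: field_simps)
    moreover have "(real n + 1) * s \<le> (real n + 1) * Tmax"
      using s(1) by (simp add: half_ival_T)
    ultimately show ?thesis
      using inv_x_add_Suc_n_increasing[OF t s(1,2)] by (simp add: algebra_simps)
  qed
  then have "1 / x t \<le> (real n + 1) * (Tmax - t)"
    by (rule field_le_epsilon)
  moreover have "0 < (real n + 1) * (Tmax - t)"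
    using t by (simp add: half_ival_T)
  moreover have "1 / a \<le> b" if "0 < a" "0 < b" "1 / b \<le> a" for a b :: real
    using that by (simp add: field_simps)
  ultimately show ?thesis
    using x_ge_1[OF t] by simp
qed

lemma x_unbounded:
  assumes max: "is_max_sol n y0 z0 T x y z"
  shows "\<exists>s\<in>half_ival T. M < x s"
proof (rule ccontr)
  assume "\<not> (\<exists>s\<in>half_ival T. M < x s)"
  then have x_le_M: "\<And>s. s \<in> half_ival T \<Longrightarrow> x s \<le> M"
    by auto
  define W where "W t = (x t, y t, z t)" for t
  have "bounded (W ` {0..<Tmax})"
  proof (rule boundedI)
    fix w assume "w \<in> W ` {0..<Tmax}"
    then obtain s where s: "s \<in> half_ival T" and w: "w = W s"
      by (auto simp: half_ival_T)
    have "y0 \<le> y s"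
      using y_increasing[OF zero_in_half_ival[OF T_pos] s] y_0 s by (simp add: half_ival_def)
    then have "norm (y s, z s) \<le> (\<bar>y0\<bar> + M) + M"
      using invariant_region[OF s] x_le_M[OF s] norm_Pair_le[of "y s" "z s"] by auto
    then show "norm w \<le> M + (\<bar>y0\<bar> + M + M)"
      using w x_ge_1[OF s] x_le_M[OF s] norm_Pair_le[of "x s" "(y s, z s)"] by (simp add: W_def)
  qed
  moreover have "(W has_vector_derivative ode_field n (W t)) (at t within {0..<Tmax})"
    if "t \<in> {0..<Tmax}" for t
    using sol that unfolding is_sol_iff_ode_field W_def half_ival_T by blast
  ultimately obtain h V where "0 < h" and VW: "\<And>t. t \<in> {0..<Tmax} \<Longrightarrow> V t = W t"
    and V: "\<And>t. t \<in> {0..<Tmax+h} \<Longrightarrow> (V has_vector_derivative ode_field n (V t)) (at t within {0..<Tmax+h})"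
    using bounded_solution_extends[OF lipschitz_on_balls_ode_field Tmax_pos] by metis
  have "is_sol n y0 z0 (ereal (Tmax + h)) (\<lambda>t. fst (V t)) (\<lambda>t. fst (snd (V t))) (\<lambda>t. snd (snd (V t)))"
    unfolding is_sol_iff_ode_field half_ival_ereal
    using V VW[of 0] Tmax_pos \<open>0 < h\<close> x_0 y_0 z_0 by (simp add: W_def)
  moreover have "T < ereal (Tmax + h)"
    using T_pos T_le_inverse_n \<open>0 < h\<close> by (cases T) auto
  moreover have "\<forall>t\<in>half_ival T. fst (V t) = x t \<and> fst (snd (V t)) = y t \<and> snd (snd (V t)) = z t"
    using VW by (simp add: W_def half_ival_T)
  ultimately show False
    using max unfolding is_max_sol_def by blast
qed

lemma x_blowup_rate:
  assumes "is_max_sol n y0 z0 T x y z"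
  shows "\<exists>C>0. \<forall>t\<in>half_ival T. 1 / (C * (Tmax - t)) < x t \<and> x t < C / (Tmax - t)"
proof (intro exI[of _ "real n + 2"] conjI ballI)
  fix t assume t: "t \<in> half_ival T"
  have "0 < Tmax - t"
    using t by (simp add: half_ival_T)
  have "1 / ((real n + 2) * (Tmax - t)) < 1 / ((real n + 1) * (Tmax - t))"
    using \<open>0 < Tmax - t\<close> by (intro divide_strict_left_mono mult_strict_right_mono) auto
  also have "\<dots> \<le> x t"
    using x_lower[OF x_unbounded[OF assms] t] .
  finally show "1 / ((real n + 2) * (Tmax - t)) < x t" .
  have "x t \<le> 1 / real n / (Tmax - t)"
    using x_upper[OF t] by simp
  also have "\<dots> < (real n + 2) / (Tmax - t)"
  proof (rule divide_strict_right_mono[OF _ \<open>0 < Tmax - t\<close>])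
    have "1 / real n \<le> 1"
      using n_pos by simp
    then show "1 / real n < real n + 2"
      by linarith
  qed
  finally show "x t < (real n + 2) / (Tmax - t)" .
qed simp

end

theorem lemma3p7:
  fixes n :: nat and y0 z0 :: real and T :: ereal and x y z :: "real \<Rightarrow> real"
  assumes "n \<ge> 2"
    and "y0 > 0" and "z0 > 0"
    and "z0\<^sup>2 * (real n + 1) / (z0\<^sup>2 + real n) \<le> y0" and "y0 < 1"
    and "is_max_sol n y0 z0 T x y z"
  shows "T < \<infinity> \<and>
         (\<forall>t\<in>half_ival T. y t < x t \<and> z t < x t) \<and>
         (\<exists>C>0. \<forall>t\<in>half_ival T.
              1 / (C * (real_of_ereal T - t)) < x t \<and> x t < C / (real_of_ereal T - t))"
proof -
  have "0 < z0\<^sup>2 + real n"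
    using assms(1) by (simp add: add_nonneg_pos)
  moreover have "z0\<^sup>2 * (real n + 1) / (z0\<^sup>2 + real n) < 1"
    using assms(4,5) by linarith
  ultimately have "z0\<^sup>2 * (real n + 1) < z0\<^sup>2 + real n"
    by (simp add: pos_divide_less_eq)
  then have "real n * z0\<^sup>2 < real n * 1"
    by (simp add: algebra_simps)
  then have "\<bar>z0\<bar> < 1"
    using assms(1) by (simp add: abs_square_less_1[symmetric])
  then interpret ode_solution n y0 z0 T x y z
    using assms unfolding is_max_sol_def by unfold_locales auto
  show ?thesis
    using T_less_infinity invariant_region x_blowup_rate[OF assms(6)] by fastforce
qed

end
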